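(* Let $\mathcal H$ be an infinite-dimensional complex Hilbert space. The generalized effect algebras $(\mathcal R_f(\mathcal H);\oplus_{|\mathcal R_f(\mathcal H)},o)$ and $(\mathcal C_f(\mathcal H);\oplus_{|\mathcal C_f(\mathcal H)},o)$ are not monotone Dedekind downwards $\sigma$-complete.
   Context: Bilinear forms $t$ on $\mathcal H$ are sesquilinear maps $D(t)\times D(t)\to\mathbb C$ on a dense linear subspace $D(t)$ (linear in the first argument); $t$ is positive if $t(x,x)\ge0$ on $D(t)$, bounded if $\sup\{t(x,x)\mid x\in D(t),\|x\|=1\}<\infty$. The sum $t+s$ has domain $D(t)\cap D(s)$. $o$ is the zero form on $\mathcal H$. $\mathcal V_f(\mathcal H)$ is the set of positive bilinear forms with dense domain such that $D(t)=\mathcal H$ whenever $t$ is bounded; $t\oplus s$ is defined iff $t$ or $s$ is bounded or $D(t)=D(s)$, and then $t\oplus s=t+s$. A positive form is closed if $D(t)$ is a Hilbert space under $(x,y)_t=t(x,y)+(1+m_t)(x,y)$, $m_t=\inf\{t(x,x)\mid x\in D(t),\|x\|=1\}$; closable if it has a closed extension. For positive $t$, the regular part $t_r$ is the largest closable positive form with domain $D(t)$ and $t_r(x,x)\le t(x,x)$ on $D(t)$; $t_s=t-t_r$; $t$ is regular if $t_s=0$. $\mathcal R_f(\mathcal H)$ and $\mathcal C_f(\mathcal H)$ are the sets of regular, resp. closed, forms in $\mathcal V_f(\mathcal H)$. For $Q\subseteq\mathcal V_f(\mathcal H)$, $x\oplus_{|Q}y$ is defined iff $x\oplus y$ is defined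 and lies in $Q$, and then equals $x\oplus y$; these restrictions make $\mathcal R_f(\mathcal H)$ and $\mathcal C_f(\mathcal H)$ generalized effect algebras, with induced order $x\le_Q y$ iff $x\oplus_{|Q}z=y$ for some $z\in Q$. A generalized effect algebra is monotone Dedekind downwards $\sigma$-complete if every sequence $x_1\ge x_2\ge\cdots$ in its induced order has an infimum in it. *)

theory Defs
  imports Complex_Main
begin

text \<open>The library has no class of complex inner product spaces, so a complex Hilbert
space is given by a carrier type 'a (an abelian group), a complex scalar multiplication
sm and an inner product ip (linear in the first argument).\<close>

definition hnorm :: "('a \<Rightarrow> 'a \<Rightarrow> complex) \<Rightarrow> 'a \<Rightarrow> real" where
  "hnorm ip x = sqrt (Re (ip x x))"

definition complex_hilbert_space ::
  "(complex \<Rightarrow> 'a::ab_group_add \<Rightarrow> 'a) \<Rightarrow> ('a \<Rightarrow> 'a \<Rightarrow> complex) \<Rightarrow> bool" where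
  "complex_hilbert_space sm ip \<longleftrightarrow>
     vector_space sm \<and>
     (\<forall>x y z. ip (x + y) z = ip x z + ip y z) \<and>
     (\<forall>c x y. ip (sm c x) y = c * ip x y) \<and>
     (\<forall>x y. ip y x = cnj (ip x y)) \<and>
     (\<forall>x. Im (ip x x) = 0 \<and> Re (ip x x) \<ge> 0) \<and>
     (\<forall>x. ip x x = 0 \<longrightarrow> x = 0) \<and>
     (\<forall>X :: nat \<Rightarrow> 'a.
        (\<forall>e>0. \<exists>N. \<forall>m\<ge>N. \<forall>n\<ge>N. hnorm ip (X m - X n) < e) \<longrightarrow>
        (\<exists>l. (\<lambda>n. hnorm ip (X n - l)) \<longlonglongrightarrow> 0))"

definition infinite_dimensional :: "(complex \<Rightarrow> 'a::ab_group_add \<Rightarrow> 'a) \<Rightarrow> bool" where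
  "infinite_dimensional sm \<longleftrightarrow> \<not> (\<exists>B. finite B \<and> module.span sm B = UNIV)"

text \<open>A form is a pair (domain, values); values outside domain x domain are normalized
to 0, so that equality of forms is equality of domains and of values on the domain.\<close>

type_synonym 'a form = "'a set \<times> ('a \<Rightarrow> 'a \<Rightarrow> complex)"

definition fdom :: "'a form \<Rightarrow> 'a set" where "fdom t = fst t"
definition fval :: "'a form \<Rightarrow> 'a \<Rightarrow> 'a \<Rightarrow> complex" where "fval t = snd t"

definition dense_in :: "('a::ab_group_add \<Rightarrow> 'a \<Rightarrow> complex) \<Rightarrow> 'a set \<Rightarrow> bool" where
  "dense_in ip D \<longleftrightarrow> (\<forall>x. \<forall>e>0. \<exists>y\<in>D. hnorm ip (x - y) < e)"

definition is_form ::
  "(complex \<Rightarrow> 'a::ab_group_add \<Rightarrow> 'a) \<Rightarrow> ('a \<Rightarrow> 'a \<Rightarrow> complex) \<Rightarrow> 'a form \<Rightarrow> bool" where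
  "is_form sm ip t \<longleftrightarrow>
     module.subspace sm (fdom t) \<and> dense_in ip (fdom t) \<and>
     (\<forall>x\<in>fdom t. \<forall>y\<in>fdom t. \<forall>z\<in>fdom t.
        fval t (x + y) z = fval t x z + fval t y z \<and>
        fval t z (x + y) = fval t z x + fval t z y) \<and>
     (\<forall>c. \<forall>x\<in>fdom t. \<forall>y\<in>fdom t.
        fval t (sm c x) y = c * fval t x y \<and>
        fval t x (sm c y) = cnj c * fval t x y) \<and>
     (\<forall>x y. \<not> (x \<in> fdom t \<and> y \<in> fdom t) \<longrightarrow> fval t x y = 0)"

definition positive_form :: "'a form \<Rightarrow> bool" where
  "positive_form t \<longleftrightarrow> (\<forall>x\<in>fdom t. Im (fval t x x) = 0 \<and> Re (fval t x x) \<ge> 0)"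

definition bounded_form :: "('a \<Rightarrow> 'a \<Rightarrow> complex) \<Rightarrow> 'a form \<Rightarrow> bool" where
  "bounded_form ip t \<longleftrightarrow>
     bdd_above {Re (fval t x x) | x. x \<in> fdom t \<and> hnorm ip x = 1}"

definition form_plus :: "'a form \<Rightarrow> 'a form \<Rightarrow> 'a form" where
  "form_plus t s = (fdom t \<inter> fdom s,
     \<lambda>x y. if x \<in> fdom t \<inter> fdom s \<and> y \<in> fdom t \<inter> fdom s
           then fval t x y + fval s x y else 0)"

definition zero_form :: "'a form" where
  "zero_form = (UNIV, \<lambda>_ _. 0)"

definition Vf :: "(complex \<Rightarrow> 'a::ab_group_add \<Rightarrow> 'a) \<Rightarrow> ('a \<Rightarrow> 'a \<Rightarrow> complex) \<Rightarrow> 'a form set" where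
  "Vf sm ip = {t. is_form sm ip t \<and> positive_form t \<and>
                  (bounded_form ip t \<longrightarrow> fdom t = UNIV)}"

definition form_oplus :: "('a \<Rightarrow> 'a \<Rightarrow> complex) \<Rightarrow> 'a form \<Rightarrow> 'a form \<Rightarrow> 'a form option" where
  "form_oplus ip t s =
     (if bounded_form ip t \<or> bounded_form ip s \<or> fdom t = fdom s
      then Some (form_plus t s) else None)"

definition lower_bound_form :: "('a \<Rightarrow> 'a \<Rightarrow> complex) \<Rightarrow> 'a form \<Rightarrow> real" where
  "lower_bound_form ip t = Inf {Re (fval t x x) | x. x \<in> fdom t \<and> hnorm ip x = 1}"

text \<open>The norm of the inner product (x,y)_t = t(x,y) + (1+m_t)(x,y).\<close>
definition tnorm :: "('a::ab_group_add \<Rightarrow> 'a \<Rightarrow> complex) \<Rightarrow> 'a form \<Rightarrow> 'a \<Rightarrow> real" where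
  "tnorm ip t x = sqrt (Re (fval t x x + complex_of_real (1 + lower_bound_form ip t) * ip x x))"

definition closed_form :: "('a::ab_group_add \<Rightarrow> 'a \<Rightarrow> complex) \<Rightarrow> 'a form \<Rightarrow> bool" where
  "closed_form ip t \<longleftrightarrow> positive_form t \<and>
     (\<forall>X :: nat \<Rightarrow> 'a. (\<forall>n. X n \<in> fdom t) \<and>
        (\<forall>e>0. \<exists>N. \<forall>m\<ge>N. \<forall>n\<ge>N. tnorm ip t (X m - X n) < e) \<longrightarrow>
        (\<exists>l\<in>fdom t. (\<lambda>n. tnorm ip t (X n - l)) \<longlonglongrightarrow> 0))"

definition closable_form ::
  "(complex \<Rightarrow> 'a::ab_group_add \<Rightarrow> 'a) \<Rightarrow> ('a \<Rightarrow> 'a \<Rightarrow> complex) \<Rightarrow> 'a form \<Rightarrow> bool" where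
  "closable_form sm ip t \<longleftrightarrow>
     (\<exists>s. is_form sm ip s \<and> positive_form s \<and> closed_form ip s \<and> fdom t \<subseteq> fdom s \<and>
          (\<forall>x\<in>fdom t. \<forall>y\<in>fdom t. fval s x y = fval t x y))"

definition is_regular_part ::
  "(complex \<Rightarrow> 'a::ab_group_add \<Rightarrow> 'a) \<Rightarrow> ('a \<Rightarrow> 'a \<Rightarrow> complex) \<Rightarrow> 'a form \<Rightarrow> 'a form \<Rightarrow> bool" where
  "is_regular_part sm ip t r \<longleftrightarrow>
     is_form sm ip r \<and> fdom r = fdom t \<and> positive_form r \<and> closable_form sm ip r \<and>
     (\<forall>x\<in>fdom t. Re (fval r x x) \<le> Re (fval t x x)) \<and>
     (\<forall>u. is_form sm ip u \<and> fdom u = fdom t \<and> positive_form u \<and> closable_form sm ip u \<and>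
          (\<forall>x\<in>fdom t. Re (fval u x x) \<le> Re (fval t x x)) \<longrightarrow>
          (\<forall>x\<in>fdom t. Re (fval u x x) \<le> Re (fval r x x)))"

definition regular_part ::
  "(complex \<Rightarrow> 'a::ab_group_add \<Rightarrow> 'a) \<Rightarrow> ('a \<Rightarrow> 'a \<Rightarrow> complex) \<Rightarrow> 'a form \<Rightarrow> 'a form" where
  "regular_part sm ip t = (THE r. is_regular_part sm ip t r)"

definition singular_part ::
  "(complex \<Rightarrow> 'a::ab_group_add \<Rightarrow> 'a) \<Rightarrow> ('a \<Rightarrow> 'a \<Rightarrow> complex) \<Rightarrow> 'a form \<Rightarrow> 'a form" where
  "singular_part sm ip t = (fdom t,
     \<lambda>x y. if x \<in> fdom t \<and> y \<in> fdom t
           then fval t x y - fval (regular_part sm ip t) x y else 0)"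

definition regular_form ::
  "(complex \<Rightarrow> 'a::ab_group_add \<Rightarrow> 'a) \<Rightarrow> ('a \<Rightarrow> 'a \<Rightarrow> complex) \<Rightarrow> 'a form \<Rightarrow> bool" where
  "regular_form sm ip t \<longleftrightarrow>
     (\<forall>x\<in>fdom t. \<forall>y\<in>fdom t. fval (singular_part sm ip t) x y = 0)"

definition Rf :: "(complex \<Rightarrow> 'a::ab_group_add \<Rightarrow> 'a) \<Rightarrow> ('a \<Rightarrow> 'a \<Rightarrow> complex) \<Rightarrow> 'a form set" where
  "Rf sm ip = {t \<in> Vf sm ip. regular_form sm ip t}"

definition Cf :: "(complex \<Rightarrow> 'a::ab_group_add \<Rightarrow> 'a) \<Rightarrow> ('a \<Rightarrow> 'a \<Rightarrow> complex) \<Rightarrow> 'a form set" where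
  "Cf sm ip = {t \<in> Vf sm ip. closed_form ip t}"

definition restr_oplus :: "('a \<Rightarrow> 'a \<Rightarrow> complex) \<Rightarrow> 'a form set \<Rightarrow> 'a form \<Rightarrow> 'a form \<Rightarrow> 'a form option" where
  "restr_oplus ip Q x y =
     (case form_oplus ip x y of None \<Rightarrow> None
      | Some z \<Rightarrow> if z \<in> Q then Some z else None)"

definition restr_le :: "('a \<Rightarrow> 'a \<Rightarrow> complex) \<Rightarrow> 'a form set \<Rightarrow> 'a form \<Rightarrow> 'a form \<Rightarrow> bool" where
  "restr_le ip Q x y \<longleftrightarrow> (\<exists>z\<in>Q. restr_oplus ip Q x z = Some y)"

definition mono_dedekind_down_sigma_complete ::
  "('a \<Rightarrow> 'a \<Rightarrow> complex) \<Rightarrow> 'a form set \<Rightarrow> bool" where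
  "mono_dedekind_down_sigma_complete ip Q \<longleftrightarrow>
     (\<forall>X :: nat \<Rightarrow> 'a form. (\<forall>n. X n \<in> Q) \<and> (\<forall>n. restr_le ip Q (X (Suc n)) (X n)) \<longrightarrow>
        (\<exists>a\<in>Q. (\<forall>n. restr_le ip Q a (X n)) \<and>
               (\<forall>b\<in>Q. (\<forall>n. restr_le ip Q b (X n)) \<longrightarrow> restr_le ip Q b a)))"

end

theory Submission imports Defs begin

(* Fix an orthonormal sequence (e k), write x_k = (x, e k), and let t[x] = sum_{k>=1} 2^k |x_k|^2 on
   its natural domain D and phi(x) = sum_{k>=1} x_k.  By AM-GM termwise, |phi|^2 <= 3 t on D, so
   a t + b |phi|^2 is closed for a > 0, b >= 0.  The form |phi|^2 itself is purely singular: ker phi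
   is dense in D for the Hilbert norm, so every closable form below |phi|^2 vanishes; hence it is
   neither regular nor closed.  The forms t_n = (1 + 1/(n+1)) t + |phi|^2 decrease, and both t and
   t + |phi|^2 lie below all of them.  An infimum a would thus satisfy t + |phi|^2 <= a <= t_n,
   forcing a = t + |phi|^2 = t (+) w with w = |phi|^2, which is not in the algebra. *)

lemma tendsto_0_sandwich:
  fixes f g :: "nat \<Rightarrow> real"
  assumes "\<And>n. 0 \<le> f n" "\<And>n. f n \<le> g n" "g \<longlonglongrightarrow> 0"
  shows "f \<longlonglongrightarrow> 0"
  by (rule real_tendsto_sandwich[where f="\<lambda>_. 0" and h=g]) (use assms in auto)

locale complex_hilbert =
  fixes sm :: "complex \<Rightarrow> 'a::ab_group_add \<Rightarrow> 'a" and ip :: "'a \<Rightarrow> 'a \<Rightarrow> complex"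
  assumes hilbert: "complex_hilbert_space sm ip"
begin

sublocale vs: vector_space sm
  using hilbert unfolding complex_hilbert_space_def by (rule conjunct1)

lemma ip_add_left: "ip (x + y) z = ip x z + ip y z"
  using hilbert unfolding complex_hilbert_space_def by blast
lemma ip_scale_left: "ip (sm c x) y = c * ip x y"
  using hilbert unfolding complex_hilbert_space_def by blast
lemma ip_cnj_commute: "ip y x = cnj (ip x y)"
  using hilbert unfolding complex_hilbert_space_def by blast
lemma Im_ip_self: "Im (ip x x) = 0"
  using hilbert unfolding complex_hilbert_space_def by blast
lemma Re_ip_self_nonneg: "Re (ip x x) \<ge> 0"
  using hilbert unfolding complex_hilbert_space_def by blast
lemma ip_self_eq_0D: "ip x x = 0 \<Longrightarrow> x = 0"
  using hilbert unfolding complex_hilbert_space_def by blast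
lemma Cauchy_convergent:
  "(\<forall>e>0. \<exists>N. \<forall>m\<ge>N. \<forall>n\<ge>N. hnorm ip (X m - X n) < e) \<Longrightarrow>
   \<exists>l. (\<lambda>n. hnorm ip (X n - l)) \<longlonglongrightarrow> 0"
  using hilbert unfolding complex_hilbert_space_def by blast

lemma ip_add_right: "ip x (y + z) = ip x y + ip x z"
  by (metis ip_cnj_commute ip_add_left complex_cnj_add)
lemma ip_scale_right: "ip x (sm c y) = cnj c * ip x y"
  by (metis ip_cnj_commute ip_scale_left complex_cnj_mult)
lemma ip_zero_left [simp]: "ip 0 y = 0"
  by (metis add.right_neutral add_right_imp_eq ip_add_left add_0)
lemma ip_zero_right [simp]: "ip y 0 = 0"
  by (metis ip_cnj_commute ip_zero_left complex_cnj_zero)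
lemma ip_minus_left: "ip (- x) y = - ip x y"
  by (metis add.right_inverse ip_add_left ip_zero_left add_eq_0_iff)
lemma ip_minus_right: "ip x (- y) = - ip x y"
  by (metis ip_cnj_commute ip_minus_left complex_cnj_minus)
lemma ip_diff_left: "ip (x - y) z = ip x z - ip y z"
  by (simp only: diff_conv_add_uminus ip_add_left ip_minus_left)
lemma ip_diff_right: "ip x (y - z) = ip x y - ip x z"
  by (simp only: diff_conv_add_uminus ip_add_right ip_minus_right)
lemma ip_sum_left: "ip (sum f A) y = (\<Sum>a\<in>A. ip (f a) y)"
  by (induct A rule: infinite_finite_induct) (auto simp: ip_add_left)
lemma ip_sum_right: "ip y (sum f A) = (\<Sum>a\<in>A. ip y (f a))"
  by (induct A rule: infinite_finite_induct) (auto simp: ip_add_right)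

abbreviation hn :: "'a \<Rightarrow> real" where "hn \<equiv> hnorm ip"

lemma hnorm_power2: "(hn x)\<^sup>2 = Re (ip x x)"
  unfolding hnorm_def using Re_ip_self_nonneg[of x] by simp
lemma ip_self: "ip x x = complex_of_real ((hn x)\<^sup>2)"
  using Im_ip_self hnorm_power2 by (simp add: complex_eq_iff)
lemma hnorm_nonneg: "hn x \<ge> 0"
  using Re_ip_self_nonneg[of x] by (simp add: hnorm_def)
lemma hnorm_eq_0_iff: "hn x = 0 \<longleftrightarrow> x = 0"
  by (metis ip_self ip_self_eq_0D ip_zero_left of_real_eq_0_iff zero_eq_power2)
lemma hnorm_zero [simp]: "hn 0 = 0"
  using hnorm_eq_0_iff by simp

lemma hnorm_scale: "hn (sm c x) = cmod c * hn x"
proof -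
  have "ip (sm c x) (sm c x) = (c * cnj c) * ip x x"
    by (simp add: ip_scale_left ip_scale_right mult.assoc)
  also have "\<dots> = complex_of_real ((cmod c)\<^sup>2 * (hn x)\<^sup>2)"
    by (simp add: ip_self flip: complex_norm_square)
  finally have "(hn (sm c x))\<^sup>2 = (cmod c * hn x)\<^sup>2"
    by (simp add: hnorm_power2 power_mult_distrib)
  then show ?thesis using hnorm_nonneg by (simp add: power2_eq_iff_nonneg)
qed

lemma hnorm_minus_commute: "hn (x - y) = hn (y - x)"
  using hnorm_scale[of "-1" "x - y"] by simp

lemma hnorm_uminus: "hn (- x) = hn x"
  using hnorm_minus_commute[of 0 x] by simp

lemma norm_ip_le: "cmod (ip x y) \<le> hn x * hn y"
proof (cases "y = 0")
  case True then show ?thesis by simp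
next
  case False
  define r where "r = (hn y)\<^sup>2"
  have r: "r > 0" using False hnorm_eq_0_iff hnorm_nonneg unfolding r_def by (metis zero_less_power2)
  define A where "A = ip x y"
  define c where "c = A / of_real r"
  have "0 \<le> Re (ip (x - sm c y) (x - sm c y))" by (rule Re_ip_self_nonneg)
  also have "ip (x - sm c y) (x - sm c y) = ip x x - cnj c * A - c * cnj A + c * cnj c * ip y y"
    unfolding A_def
    by (simp add: ip_diff_left ip_diff_right ip_scale_left ip_scale_right
        ip_cnj_commute[of y x] algebra_simps)
  also have "\<dots> = of_real ((hn x)\<^sup>2 - (cmod A)\<^sup>2 / r)"
    using r cmod_power2[of A] unfolding c_def ip_self[of y, folded r_def] ip_self[of x]
    by (simp add: field_simps complex_mult_cnj complex_eq_iff power2_eq_square)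
  finally have "(cmod A)\<^sup>2 \<le> (hn x)\<^sup>2 * r" using r by (simp add: field_simps)
  then have "(cmod A)\<^sup>2 \<le> (hn x * hn y)\<^sup>2" by (simp add: r_def power_mult_distrib)
  then show ?thesis unfolding A_def using hnorm_nonneg
    by (meson mult_nonneg_nonneg power2_le_imp_le)
qed

lemma hnorm_triangle: "hn (x + y) \<le> hn x + hn y"
proof -
  have "(hn (x + y))\<^sup>2 = (hn x)\<^sup>2 + (hn y)\<^sup>2 + 2 * Re (ip x y)"
    by (simp add: hnorm_power2 ip_add_left ip_add_right ip_cnj_commute[of x y])
  also have "\<dots> \<le> (hn x + hn y)\<^sup>2"
    using norm_ip_le[of x y] complex_Re_le_cmod[of "ip x y"]
    by (simp add: power2_eq_square algebra_simps)
  finally show ?thesis using hnorm_nonneg by (meson add_nonneg_nonneg power2_le_imp_le)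
qed

lemma hnorm_triangle_diff: "hn (x - z) \<le> hn (x - y) + hn (y - z)"
  using hnorm_triangle[of "x - y" "y - z"] by simp

lemma form_subspace: "is_form sm ip t \<Longrightarrow> vs.subspace (fdom t)"
  by (simp add: is_form_def)

lemma form_diag_expand:
  assumes t: "is_form sm ip t" and x: "x \<in> fdom t" and y: "y \<in> fdom t"
  shows "fval t (x + sm c y) (x + sm c y) =
    fval t x x + cnj c * fval t x y + c * fval t y x + c * cnj c * fval t y y"
proof -
  have cy: "sm c y \<in> fdom t" using vs.subspace_scale[OF form_subspace[OF t] y] .
  have "x + sm c y \<in> fdom t" using vs.subspace_add[OF form_subspace[OF t] x cy] .
  with t x y cy show ?thesis
    unfolding is_form_def by (simp add: algebra_simps)
qed

lemma form_eqI:
  assumes r: "is_form sm ip r" and s: "is_form sm ip s" and d: "fdom r = fdom s"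
    and q: "\<And>x. x \<in> fdom r \<Longrightarrow> fval r x x = fval s x x"
  shows "r = s"
proof -
  have "fval r x y = fval s x y" for x y
  proof (cases "x \<in> fdom r \<and> y \<in> fdom r")
    case False then show ?thesis using r s d unfolding is_form_def by metis
  next
    case True
    then have x: "x \<in> fdom r" and y: "y \<in> fdom r" by auto
    define A where "A = fval r x y - fval s x y"
    define B where "B = fval r y x - fval s y x"
    have eq: "cnj c * A + c * B = 0" for c
    proof -
      have "x + sm c y \<in> fdom r"
        using vs.subspace_add[OF form_subspace[OF r] x vs.subspace_scale[OF form_subspace[OF r] y]] .
      then have "fval r (x + sm c y) (x + sm c y) = fval s (x + sm c y) (x + sm c y)" by (rule q)
      then show ?thesis
        unfolding form_diag_expand[OF r x y] form_diag_expand[OF s, of x y, folded d, OF x y] A_def B_def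
        using q[OF x] q[OF y] by (simp add: algebra_simps)
    qed
    have "A = 0" using eq[of 1] eq[of \<i>] by (simp add: complex_eq_iff) \<comment> \<open>polarization\<close>
    then show ?thesis by (simp add: A_def)
  qed
  then show ?thesis using d by (simp add: prod_eq_iff fdom_def fval_def fun_eq_iff)
qed

lemma positive_form_hermitian:
  assumes t: "is_form sm ip t" and p: "positive_form t" and x: "x \<in> fdom t" and y: "y \<in> fdom t"
  shows "fval t y x = cnj (fval t x y)"
proof -
  have Im0: "Im (fval t z z) = 0" if "z \<in> fdom t" for z
    using p that by (simp add: positive_form_def)
  have "Im (cnj c * fval t x y + c * fval t y x) = 0" for c
    using Im0[OF x] Im0[OF y] Im0[of "x + sm c y"] form_diag_expand[OF t x y, of c]
      vs.subspace_add[OF form_subspace[OF t] x vs.subspace_scale[OF form_subspace[OF t] y]]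
    by (simp add: complex_mult_cnj)
  from this[of 1] this[of \<i>] show ?thesis by (simp add: complex_eq_iff)
qed

lemma positive_form_null:
  assumes t: "is_form sm ip t" and p: "positive_form t" and v: "v \<in> fdom t" and w: "w \<in> fdom t"
    and null: "fval t v v = 0"
  shows "fval t w v = 0"
proof (rule ccontr)
  define A where "A = fval t w v"
  assume "fval t w v \<noteq> 0"
  then have A: "(cmod A)\<^sup>2 > 0" by (simp add: A_def)
  define r where "r = (Re (fval t w w) + 1) / (cmod A)\<^sup>2"
  define c where "c = - of_real r * A"
  have "w + sm c v \<in> fdom t"
    using vs.subspace_add[OF form_subspace[OF t] w vs.subspace_scale[OF form_subspace[OF t] v]] .
  then have "0 \<le> Re (fval t (w + sm c v) (w + sm c v))"
    using p by (simp add: positive_form_def)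
  also have "\<dots> = Re (fval t w w) - 2 * r * (cmod A)\<^sup>2"
    unfolding form_diag_expand[OF t w v] positive_form_hermitian[OF t p w v] null
    using cmod_power2[of A] by (simp add: c_def A_def power2_eq_square algebra_simps)
  also have "\<dots> = - Re (fval t w w) - 2"
    using A by (simp add: r_def)
  finally show False
    using p w unfolding positive_form_def by force
qed

lemma form_diag_add_null:
  assumes t: "is_form sm ip t" and p: "positive_form t" and v: "v \<in> fdom t" and w: "w \<in> fdom t"
    and null: "fval t v v = 0"
  shows "fval t (v + w) (v + w) = fval t w w"
proof -
  have wv: "fval t w v = 0" by (rule positive_form_null[OF t p v w null])
  then have "fval t v w = 0" using positive_form_hermitian[OF t p w v] by simp
  then show ?thesis using form_diag_expand[OF t v w, of 1] null wv by simp
qed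

lemma form_diag_uminus:
  assumes t: "is_form sm ip t" and z: "z \<in> fdom t"
  shows "fval t (- z) (- z) = fval t z z"
proof -
  have mz: "sm (-1) z \<in> fdom t" using vs.subspace_scale[OF form_subspace[OF t] z] .
  have "fval t (sm (-1) z) (sm (-1) z) = (-1) * fval t z (sm (-1) z)"
    using t z mz unfolding is_form_def by blast
  also have "fval t z (sm (-1) z) = cnj (-1) * fval t z z"
    using t z unfolding is_form_def by blast
  finally show ?thesis by (simp add: vs.scale_minus_left)
qed

lemma Re_form_diag_nonneg: "is_form sm ip t \<Longrightarrow> positive_form t \<Longrightarrow> Re (fval t z z) \<ge> 0"
  by (cases "z \<in> fdom t") (auto simp: is_form_def positive_form_def)

text \<open>The unit vector \<open>u\<close> only serves to make the infimum defining \<open>m\<^sub>t\<close> range over a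
  nonempty set.\<close>
lemma lower_bound_form_nonneg:
  assumes "positive_form t" "u \<in> fdom t" "hn u = 1"
  shows "lower_bound_form ip t \<ge> 0"
  unfolding lower_bound_form_def
  by (rule cInf_greatest) (use assms in \<open>auto simp: positive_form_def\<close>)

lemma tnorm_power2:
  assumes t: "is_form sm ip t" and p: "positive_form t" and u: "u \<in> fdom t" "hn u = 1"
  shows "(tnorm ip t z)\<^sup>2 = Re (fval t z z) + (1 + lower_bound_form ip t) * (hn z)\<^sup>2"
    and "tnorm ip t z \<ge> 0"
proof -
  have "Re (fval t z z) + (1 + lower_bound_form ip t) * (hn z)\<^sup>2 \<ge> 0"
    using Re_form_diag_nonneg[OF t p, of z] lower_bound_form_nonneg[OF p u] by simp
  then show "(tnorm ip t z)\<^sup>2 = Re (fval t z z) + (1 + lower_bound_form ip t) * (hn z)\<^sup>2"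
    and "tnorm ip t z \<ge> 0"
    by (simp_all add: tnorm_def ip_self)
qed

lemma hnorm_le_tnorm:
  assumes "is_form sm ip t" "positive_form t" "u \<in> fdom t" "hn u = 1"
  shows "hn z \<le> tnorm ip t z"
proof (rule power2_le_imp_le)
  have "Re (fval t z z) \<ge> 0" by (rule Re_form_diag_nonneg[OF assms(1,2)])
  moreover have "(hn z)\<^sup>2 \<le> (1 + lower_bound_form ip t) * (hn z)\<^sup>2"
    using lower_bound_form_nonneg[OF assms(2-4)] by (simp add: mult_le_cancel_right1)
  ultimately show "(hn z)\<^sup>2 \<le> (tnorm ip t z)\<^sup>2"
    unfolding tnorm_power2(1)[OF assms] by linarith
qed (rule tnorm_power2(2)[OF assms])

lemma Re_form_le_tnorm_power2:
  assumes "is_form sm ip t" "positive_form t" "u \<in> fdom t" "hn u = 1"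
  shows "Re (fval t z z) \<le> (tnorm ip t z)\<^sup>2"
  unfolding tnorm_power2[OF assms] using lower_bound_form_nonneg[OF assms(2-4)] by simp

lemma tnorm_null:
  assumes t: "is_form sm ip t" and p: "positive_form t" and u: "u \<in> fdom t" "hn u = 1"
    and null: "fval t z z = 0"
  shows "tnorm ip t z = sqrt (1 + lower_bound_form ip t) * hn z"
proof -
  have "(tnorm ip t z)\<^sup>2 = (sqrt (1 + lower_bound_form ip t) * hn z)\<^sup>2"
    using tnorm_power2(1)[OF t p u, of z] null lower_bound_form_nonneg[OF p u]
    by (simp add: power_mult_distrib)
  then show ?thesis
    using lower_bound_form_nonneg[OF p u] hnorm_nonneg tnorm_power2(2)[OF t p u]
    by (simp add: power2_eq_iff_nonneg)
qed

lemma hnorm_limit_unique: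
  assumes "(\<lambda>n. hn (v n - x)) \<longlonglongrightarrow> 0" "(\<lambda>n. hn (v n - l)) \<longlonglongrightarrow> 0"
  shows "x = l"
proof -
  have "hn (x - l) \<le> 0"
  proof (rule LIMSEQ_le_const[OF tendsto_add[OF assms, simplified]], intro exI allI impI)
    fix n show "hn (x - l) \<le> hn (v n - x) + hn (v n - l)"
      using hnorm_triangle_diff[of x l "v n"] by (simp add: hnorm_minus_commute[of x])
  qed
  then show ?thesis using hnorm_nonneg[of "x - l"] hnorm_eq_0_iff[of "x - l"] by simp
qed

text \<open>On a sequence along which \<open>t\<close> vanishes, the norm of \<open>D(t)\<close> is a multiple of the
  Hilbert norm, so a limit in \<open>\<H>\<close> is also a limit in \<open>D(t)\<close>.\<close>
lemma closed_form_limit: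
  assumes t: "is_form sm ip t" and p: "positive_form t" and c: "closed_form ip t"
    and u: "u \<in> fdom t" "hn u = 1"
    and v: "\<And>n. v n \<in> fdom t" and null: "\<And>n m. fval t (v n - v m) (v n - v m) = 0"
    and lim: "(\<lambda>n. hn (v n - x)) \<longlonglongrightarrow> 0"
  shows "x \<in> fdom t \<and> (\<lambda>n. Re (fval t (v n - x) (v n - x))) \<longlonglongrightarrow> 0"
proof -
  define m where "m = lower_bound_form ip t"
  have m: "m \<ge> 0" unfolding m_def by (rule lower_bound_form_nonneg[OF p u])
  have tv: "tnorm ip t (v i - v j) = sqrt (1 + m) * hn (v i - v j)" for i j
    unfolding m_def by (rule tnorm_null[OF t p u null])
  have Cauchy: "\<exists>N. \<forall>i\<ge>N. \<forall>j\<ge>N. tnorm ip t (v i - v j) < e" if e: "e > 0" for e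
  proof -
    define d where "d = e / (2 * sqrt (1 + m))"
    have d: "d > 0" using e m by (simp add: d_def)
    obtain N where N: "\<forall>n\<ge>N. hn (v n - x) < d"
      using lim[unfolded LIMSEQ_iff] d hnorm_nonneg by fastforce
    have "tnorm ip t (v i - v j) < e" if "i \<ge> N" "j \<ge> N" for i j
    proof -
      have "tnorm ip t (v i - v j) \<le> sqrt (1 + m) * (hn (v i - x) + hn (x - v j))"
        unfolding tv using hnorm_triangle_diff[of "v i" "v j" x] by (rule mult_left_mono) (use m in simp)
      also have "\<dots> < sqrt (1 + m) * (d + d)"
        using N that m by (intro mult_strict_left_mono add_strict_mono) (auto simp: hnorm_minus_commute[of x])
      also have "\<dots> = e" using m by (simp add: d_def)
      finally show ?thesis .
    qed
    then show ?thesis by blast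
  qed
  obtain l where l: "l \<in> fdom t" and tl: "(\<lambda>n. tnorm ip t (v n - l)) \<longlonglongrightarrow> 0"
    using c v Cauchy unfolding closed_form_def by blast
  have hl: "(\<lambda>n. hn (v n - l)) \<longlonglongrightarrow> 0"
    by (rule tendsto_0_sandwich[OF _ _ tl]) (auto simp: hnorm_nonneg hnorm_le_tnorm[OF t p u])
  have "x = l" by (rule hnorm_limit_unique[OF lim hl])
  have "(\<lambda>n. Re (fval t (v n - x) (v n - x))) \<longlonglongrightarrow> 0"
  proof (rule tendsto_0_sandwich)
    show "Re (fval t (v n - x) (v n - x)) \<ge> 0" for n
      by (rule Re_form_diag_nonneg[OF t p])
    show "Re (fval t (v n - x) (v n - x)) \<le> (tnorm ip t (v n - x))\<^sup>2" for n
      by (rule Re_form_le_tnorm_power2[OF t p u])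
    show "(\<lambda>n. (tnorm ip t (v n - x))\<^sup>2) \<longlonglongrightarrow> 0"
      using tendsto_power[OF tl, of 2] \<open>x = l\<close> by simp
  qed
  with l \<open>x = l\<close> show ?thesis by simp
qed

lemma closed_form_null_limit:
  assumes t: "is_form sm ip t" and p: "positive_form t" and c: "closed_form ip t"
    and u: "u \<in> fdom t" "hn u = 1"
    and v: "\<And>n. v n \<in> fdom t" and null: "\<And>n. fval t (v n) (v n) = 0"
    and lim: "(\<lambda>n. hn (v n - x)) \<longlonglongrightarrow> 0"
  shows "x \<in> fdom t \<and> fval t x x = 0"
proof -
  have sub: "vs.subspace (fdom t)" by (rule form_subspace[OF t])
  have "fval t (v n + - v m) (v n + - v m) = 0" for n m
    using form_diag_add_null[OF t p v vs.subspace_neg[OF sub v] null] form_diag_uminus[OF t v] null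
    by simp
  then obtain x_in: "x \<in> fdom t" and to0: "(\<lambda>n. Re (fval t (v n - x) (v n - x))) \<longlonglongrightarrow> 0"
    using closed_form_limit[OF t p c u v _ lim] by fastforce
  have "fval t (v n - x) (v n - x) = fval t x x" for n
    using form_diag_add_null[OF t p v vs.subspace_neg[OF sub x_in] null] form_diag_uminus[OF t x_in]
    by simp
  then have "Re (fval t x x) = 0" using to0 LIMSEQ_unique[OF tendsto_const] by fastforce
  moreover have "Im (fval t x x) = 0" using p x_in by (simp add: positive_form_def)
  ultimately show ?thesis using x_in by (simp add: complex_eq_iff)
qed

lemma regular_part_eqI:
  assumes "is_regular_part sm ip t r"
  shows "regular_part sm ip t = r"
  unfolding regular_part_def
proof (rule the_equality)
  fix r' assume r': "is_regular_part sm ip t r'"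
  show "r' = r"
  proof (rule form_eqI)
    show "is_form sm ip r'" "is_form sm ip r" "fdom r' = fdom r"
      using assms r' by (auto simp: is_regular_part_def)
    fix x assume x: "x \<in> fdom r'"
    have "Re (fval r' x x) = Re (fval r x x)"
      using assms r' x unfolding is_regular_part_def by (metis (no_types, lifting) order_antisym)
    moreover have "Im (fval r' x x) = 0" "Im (fval r x x) = 0"
      using assms r' x unfolding is_regular_part_def positive_form_def by auto
    ultimately show "fval r' x x = fval r x x" by (simp add: complex_eq_iff)
  qed
qed (rule assms)

lemma closed_imp_regular:
  assumes "is_form sm ip t" "positive_form t" "closed_form ip t"
  shows "regular_form sm ip t"
proof -
  have "is_regular_part sm ip t t"
    unfolding is_regular_part_def closable_form_def using assms by blast
  then show ?thesis
    by (simp add: regular_part_eqI regular_form_def singular_part_def fval_def)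
qed

lemma zero_form_closed:
  assumes u: "hn u = 1"
  shows "closed_form ip zero_form"
proof -
  have dom: "fdom zero_form = UNIV" and val: "fval zero_form x y = 0" for x y
    by (auto simp: zero_form_def fdom_def fval_def)
  have "lower_bound_form ip zero_form = 0"
    unfolding lower_bound_form_def dom val by (rule cInf_eq_minimum) (use u in auto)
  then have "tnorm ip zero_form z = hn z" for z
    by (simp add: tnorm_def val ip_self hnorm_nonneg)
  then show ?thesis
    using Cauchy_convergent by (simp add: closed_form_def positive_form_def dom val)
qed

lemma closable_zero_on:
  assumes "hn u = 1"
  shows "closable_form sm ip (D, \<lambda>_ _. 0)"
proof -
  have "dense_in ip UNIV"
    unfolding dense_in_def by (metis diff_self hnorm_zero UNIV_I)
  then have "is_form sm ip zero_form"
    by (simp add: is_form_def zero_form_def fdom_def fval_def vs.subspace_UNIV)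
  then show ?thesis
    unfolding closable_form_def using zero_form_closed[OF assms(1)]
    by (intro exI[of _ zero_form]) (auto simp: zero_form_def fdom_def fval_def positive_form_def)
qed

lemma orthonormal_extend:
  assumes inf: "infinite_dimensional sm"
    and L: "\<forall>i<length L. \<forall>j<length L. ip (L!i) (L!j) = (if i = j then 1 else 0)"
  shows "\<exists>u. ip u u = 1 \<and> (\<forall>j<length L. ip u (L!j) = 0)"
proof -
  obtain v where v: "v \<notin> vs.span (set L)"
    using inf unfolding infinite_dimensional_def by blast
  define w where "w = v - (\<Sum>i<length L. sm (ip v (L!i)) (L!i))"
  have orth: "ip w (L!j) = 0" if "j < length L" for j
  proof -
    have "ip (\<Sum>i<length L. sm (ip v (L!i)) (L!i)) (L!j) = (\<Sum>i<length L. ip v (L!i) * ip (L!i) (L!j))"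
      by (simp add: ip_sum_left ip_scale_left)
    also have "\<dots> = ip v (L!j)"
      using L that by (simp add: if_distrib[of "\<lambda>x. _ * x"] cong: if_cong)
    finally show ?thesis unfolding w_def ip_diff_left by simp
  qed
  have "w \<noteq> 0"
  proof
    assume "w = 0"
    then have "v = (\<Sum>i<length L. sm (ip v (L!i)) (L!i))" unfolding w_def by simp
    also have "\<dots> \<in> vs.span (set L)"
      by (intro vs.span_sum vs.span_scale vs.span_base) simp
    finally show False using v by simp
  qed
  then have "hn w > 0" using hnorm_eq_0_iff hnorm_nonneg by (metis order_neq_le_trans)
  then have "hn (sm (of_real (1 / hn w)) w) = 1" by (simp add: hnorm_scale norm_divide)
  then show ?thesis
    by (intro exI[of _ "sm (of_real (1 / hn w)) w"]) (simp add: ip_self ip_scale_left orth)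
qed

lemma orthonormal_sequence_exists:
  assumes "infinite_dimensional sm"
  shows "\<exists>e :: nat \<Rightarrow> 'a. \<forall>i j. ip (e i) (e j) = (if i = j then 1 else 0)"
proof -
  define orthonormal :: "'a list \<Rightarrow> bool" where
    "orthonormal L \<longleftrightarrow> (\<forall>i<length L. \<forall>j<length L. ip (L!i) (L!j) = (if i = j then 1 else 0))" for L
  define next_vec where
    "next_vec L = (SOME u. ip u u = 1 \<and> (\<forall>j<length L. ip u (L!j) = 0))" for L
  define L where "L n = rec_nat [] (\<lambda>_ l. l @ [next_vec l]) n" for n
  have L_Suc: "L (Suc n) = L n @ [next_vec (L n)]" for n by (simp add: L_def)
  have len: "length (L n) = n" for n by (induct n) (simp_all add: L_def)
  have "orthonormal (L n)" for n
  proof (induct n)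
    case 0 then show ?case by (simp add: orthonormal_def L_def)
  next
    case (Suc n)
    have "ip (next_vec (L n)) (next_vec (L n)) = 1 \<and> (\<forall>j<n. ip (next_vec (L n)) (L n ! j) = 0)"
      unfolding next_vec_def using someI_ex[OF orthonormal_extend[OF assms Suc[unfolded orthonormal_def]]]
      by (simp add: len)
    moreover have "ip (L n ! j) (next_vec (L n)) = 0" if "j < n" for j
      using calculation that ip_cnj_commute[of "next_vec (L n)" "L n ! j"] by simp
    ultimately show ?case
      using Suc unfolding orthonormal_def L_Suc len
      by (auto simp: nth_append len less_Suc_eq)
  qed
  moreover have prefix: "L n ! i = L (Suc i) ! i" if "i < n" for i n
    using that by (induct n) (auto simp: L_Suc nth_append len less_Suc_eq)
  ultimately have "ip (L (Suc i) ! i) (L (Suc j) ! j) = (if i = j then 1 else 0)" for i j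
    unfolding orthonormal_def
    using prefix[of i "Suc (max i j)"] prefix[of j "Suc (max i j)"] len[of "Suc (max i j)"]
    by (metis le_imp_less_Suc max.cobounded1 max.cobounded2)
  then show ?thesis by (intro exI[where x="\<lambda>i. L (Suc i) ! i"] allI)
qed

end

locale orthonormal_sequence = complex_hilbert +
  fixes e :: "nat \<Rightarrow> 'a"
  assumes ip_e: "ip (e i) (e j) = (if i = j then 1 else 0)"
begin

lemma hnorm_e: "hn (e i) = 1"
  using hnorm_power2[of "e i"] hnorm_nonneg[of "e i"] by (simp add: ip_e power2_eq_1_iff)

definition coef :: "'a \<Rightarrow> nat \<Rightarrow> complex" where "coef x k = ip x (e k)"

lemma coef_add: "coef (x + y) k = coef x k + coef y k" by (simp add: coef_def ip_add_left)
lemma coef_diff: "coef (x - y) k = coef x k - coef y k" by (simp add: coef_def ip_diff_left)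
lemma coef_scale: "coef (sm c x) k = c * coef x k" by (simp add: coef_def ip_scale_left)
lemma coef_zero [simp]: "coef 0 k = 0" by (simp add: coef_def)
lemma coef_e: "coef (e j) k = (if k = j then 1 else 0)" by (simp add: coef_def ip_e)

lemma coef_sum_e:
  "finite A \<Longrightarrow> coef (\<Sum>k\<in>A. sm (c k) (e k)) j = (if j \<in> A then c j else 0)"
  by (simp add: coef_def ip_sum_left ip_scale_left ip_e if_distrib[of "\<lambda>x. _ * x"] cong: if_cong)

lemma hnorm_sum_e_power2:
  assumes "finite A"
  shows "(hn (\<Sum>k\<in>A. sm (c k) (e k)))\<^sup>2 = (\<Sum>k\<in>A. (cmod (c k))\<^sup>2)"
proof -
  have "complex_of_real ((hn (\<Sum>k\<in>A. sm (c k) (e k)))\<^sup>2) = (\<Sum>k\<in>A. c k * cnj (c k))"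
    unfolding ip_self[symmetric] ip_sum_right ip_scale_right
    using coef_sum_e[OF assms, of c] assms by (simp add: coef_def mult.commute cong: sum.cong)
  also have "\<dots> = complex_of_real (\<Sum>k\<in>A. (cmod (c k))\<^sup>2)"
    by (simp only: of_real_sum complex_norm_square)
  finally show ?thesis by (simp only: of_real_eq_iff)
qed

lemma Bessel_inequality_finite:
  assumes "finite A"
  shows "(\<Sum>k\<in>A. (cmod (coef x k))\<^sup>2) \<le> (hn x)\<^sup>2"
proof -
  define S where "S = (\<Sum>k\<in>A. sm (coef x k) (e k))"
  define s where "s = (\<Sum>k\<in>A. (cmod (coef x k))\<^sup>2)"
  have "ip x S = (\<Sum>k\<in>A. coef x k * cnj (coef x k))"
    unfolding S_def by (simp add: ip_sum_right ip_scale_right coef_def mult.commute)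
  also have "\<dots> = of_real s"
    by (simp only: s_def of_real_sum complex_norm_square)
  finally have xS: "ip x S = of_real s" .
  have SS: "ip S S = of_real s"
    unfolding s_def S_def ip_self hnorm_sum_e_power2[OF assms] ..
  have "ip (x - S) (x - S) = ip x x - of_real s"
    using xS SS ip_cnj_commute[of S x] by (simp add: ip_diff_left ip_diff_right)
  then show ?thesis
    using Re_ip_self_nonneg[of "x - S"] by (simp add: s_def hnorm_power2)
qed

lemma summable_coef_power2: "summable (\<lambda>k. (cmod (coef x k))\<^sup>2)"
  by (rule bounded_imp_summable[where B="(hn x)\<^sup>2"]) (auto intro: Bessel_inequality_finite)

lemma norm_coef_diff_le: "cmod (coef x k - coef y k) \<le> hn (x - y)"
  using norm_ip_le[of "x - y" "e k"] by (simp add: coef_def ip_diff_left hnorm_e)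

lemma coef_tendsto:
  assumes "(\<lambda>n. hn (X n - l)) \<longlonglongrightarrow> 0"
  shows "(\<lambda>n. coef (X n) k) \<longlonglongrightarrow> coef l k"
proof -
  have "(\<lambda>n. cmod (coef (X n) k - coef l k)) \<longlonglongrightarrow> 0"
    by (rule tendsto_0_sandwich[OF _ _ assms]) (simp_all add: norm_coef_diff_le)
  then show ?thesis by (rule LIM_zero_cancel[OF tendsto_norm_zero_cancel])
qed

definition psum :: "(nat \<Rightarrow> complex) \<Rightarrow> nat \<Rightarrow> 'a" where
  "psum c n = (\<Sum>k<n. sm (c k) (e k))"

lemma Riesz_Fischer:
  assumes c: "summable (\<lambda>k. (cmod (c k))\<^sup>2)"
  shows "\<exists>v. (\<lambda>n. hn (psum c n - v)) \<longlonglongrightarrow> 0"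
proof (rule Cauchy_convergent, intro allI impI)
  fix \<epsilon> :: real assume \<epsilon>: "\<epsilon> > 0"
  then obtain N where N: "\<forall>m\<ge>N. \<forall>n. norm (\<Sum>k\<in>{m..<n}. (cmod (c k))\<^sup>2) < \<epsilon>\<^sup>2"
    using c[unfolded summable_Cauchy] by (meson zero_less_power)
  have less: "hn (psum c m - psum c n) < \<epsilon>" if "n \<ge> N" "n \<le> m" for m n
  proof -
    have "{..<m} = {..<n} \<union> {n..<m}" using that by auto
    then have "psum c m - psum c n = (\<Sum>k\<in>{n..<m}. sm (c k) (e k))"
      unfolding psum_def by (simp add: sum.union_disjoint ivl_disj_int(2))
    then have "(hn (psum c m - psum c n))\<^sup>2 = (\<Sum>k\<in>{n..<m}. (cmod (c k))\<^sup>2)"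
      by (simp add: hnorm_sum_e_power2)
    also have "\<dots> < \<epsilon>\<^sup>2" using N that by (metis real_norm_def abs_le_D1 le_less_trans abs_ge_self)
    finally show ?thesis using \<epsilon> hnorm_nonneg by (meson power_less_imp_less_base less_imp_le)
  qed
  show "\<exists>N. \<forall>m\<ge>N. \<forall>n\<ge>N. hn (psum c m - psum c n) < \<epsilon>"
  proof (intro exI allI impI)
    fix m n assume "N \<le> m" "N \<le> n"
    then show "hn (psum c m - psum c n) < \<epsilon>"
      using less[of n m] less[of m n] hnorm_minus_commute by (cases "n \<le> m") auto
  qed
qed

lemma coef_psum_limit:
  assumes v: "(\<lambda>n. hn (psum c n - v)) \<longlonglongrightarrow> 0"
  shows "coef v j = c j"
proof -
  have "cmod (coef v j - c j) \<le> 0"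
  proof (rule LIMSEQ_le_const[OF v], intro exI allI impI)
    fix n assume "Suc j \<le> n"
    then have "coef (psum c n) j = c j" by (simp add: psum_def coef_sum_e)
    then show "cmod (coef v j - c j) \<le> hn (psum c n - v)"
      using norm_coef_diff_le[of v j "psum c n"] by (simp add: hnorm_minus_commute)
  qed
  then show ?thesis by simp
qed

lemma hnorm_psum_limit_le:
  assumes v: "(\<lambda>n. hn (psum c n - v)) \<longlonglongrightarrow> 0" and c: "summable (\<lambda>k. (cmod (c k))\<^sup>2)"
  shows "hn v \<le> sqrt (\<Sum>k. (cmod (c k))\<^sup>2)"
proof (rule LIMSEQ_le_const[OF tendsto_add[OF v tendsto_const, simplified]], intro exI allI impI)
  fix n :: nat
  have "(hn (psum c n))\<^sup>2 \<le> (\<Sum>k. (cmod (c k))\<^sup>2)"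
    unfolding psum_def hnorm_sum_e_power2[OF finite_lessThan] by (rule sum_le_suminf[OF c]) auto
  then have "hn (psum c n) \<le> sqrt (\<Sum>k. (cmod (c k))\<^sup>2)" using hnorm_nonneg real_le_rsqrt by blast
  moreover have "hn v \<le> hn (v - psum c n) + hn (psum c n)"
    using hnorm_triangle_diff[of v 0 "psum c n"] by simp
  ultimately show "hn v \<le> hn (psum c n - v) + sqrt (\<Sum>k. (cmod (c k))\<^sup>2)"
    by (simp add: hnorm_minus_commute)
qed

text \<open>The tail \<open>v\<close> of the Fourier series of \<open>x\<close> is small, and \<open>x - v\<close> has only finitely
  many nonzero coefficients (it need not lie in the span of the \<open>e k\<close>).\<close>
lemma finite_coef_support_dense:
  assumes "\<epsilon> > 0"
  shows "\<exists>y. (\<exists>N. \<forall>k\<ge>N. coef y k = 0) \<and> hn (x - y) < \<epsilon>"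
proof -
  define f where "f k = (cmod (coef x k))\<^sup>2" for k
  have f: "summable f" unfolding f_def by (rule summable_coef_power2)
  obtain N where N: "norm (\<Sum>i. f (i + N)) < \<epsilon>\<^sup>2"
    using suminf_exist_split[OF _ f, of "\<epsilon>\<^sup>2"] assms by auto
  define c where "c k = (if k \<ge> N then coef x k else 0)" for k
  have fc: "(cmod (c k))\<^sup>2 = (if k \<ge> N then f k else 0)" for k by (simp add: c_def f_def)
  have c: "summable (\<lambda>k. (cmod (c k))\<^sup>2)"
    unfolding fc by (rule summable_comparison_test'[OF f]) (auto simp: f_def)
  have "(\<Sum>k. (cmod (c k))\<^sup>2) = (\<Sum>i. f (i + N))"
    using suminf_split_initial_segment[OF c, of N] by (simp add: fc)
  with N have tail: "(\<Sum>k. (cmod (c k))\<^sup>2) < \<epsilon>\<^sup>2" by simp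
  obtain v where v: "(\<lambda>n. hn (psum c n - v)) \<longlonglongrightarrow> 0" using Riesz_Fischer[OF c] by blast
  have "hn v \<le> sqrt (\<Sum>k. (cmod (c k))\<^sup>2)" by (rule hnorm_psum_limit_le[OF v c])
  also have "\<dots> < \<epsilon>" using real_sqrt_less_mono[OF tail] assms by simp
  finally show ?thesis
    by (intro exI[of _ "x - v"] conjI exI[of _ N]) (simp_all add: coef_diff coef_psum_limit[OF v] c_def)
qed

end

definition weight :: "nat \<Rightarrow> real" where "weight k = (if k = 0 then 0 else 2 ^ k)"

lemma weight_nonneg: "weight k \<ge> 0" by (simp add: weight_def)

context orthonormal_sequence
begin

text \<open>\<open>t(x,y) = \<Sum>\<^sub>k w\<^sub>k x\<^sub>k cnj(y\<^sub>k)\<close> in the coordinates \<open>x\<^sub>k = (x, e\<^sub>k)\<close>, with \<open>w\<^sub>0 = 0\<close>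
  (so that \<open>m\<^sub>t = 0\<close>) and \<open>w\<^sub>k = 2\<^sup>k\<close> otherwise, and \<open>\<phi>(x) = \<Sum>\<^sub>k\<^sub>\<ge>\<^sub>1 x\<^sub>k\<close>.\<close>
definition tdom :: "'a set" where
  "tdom = {x. summable (\<lambda>k. weight k * (cmod (coef x k))\<^sup>2)}"
definition tquad :: "'a \<Rightarrow> real" where
  "tquad x = (\<Sum>k. weight k * (cmod (coef x k))\<^sup>2)"
definition tval :: "'a \<Rightarrow> 'a \<Rightarrow> complex" where
  "tval x y = (\<Sum>k. of_real (weight k) * coef x k * cnj (coef y k))"
definition phi_term :: "'a \<Rightarrow> nat \<Rightarrow> complex" where
  "phi_term x k = (if k = 0 then 0 else coef x k)"
definition phi :: "'a \<Rightarrow> complex" where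
  "phi x = suminf (phi_term x)"

lemma tdom_add:
  assumes x: "x \<in> tdom" and y: "y \<in> tdom"
  shows "x + y \<in> tdom"
  unfolding tdom_def mem_Collect_eq
proof (rule summable_comparison_test')
  show "summable (\<lambda>k. 2 * (weight k * (cmod (coef x k))\<^sup>2) + 2 * (weight k * (cmod (coef y k))\<^sup>2))"
    using x y unfolding tdom_def by (intro summable_add summable_mult) auto
  fix k
  have "(cmod (coef x k + coef y k))\<^sup>2 \<le> (cmod (coef x k) + cmod (coef y k))\<^sup>2"
    by (simp add: power_mono norm_triangle_ineq)
  also have "\<dots> \<le> 2 * (cmod (coef x k))\<^sup>2 + 2 * (cmod (coef y k))\<^sup>2"
    using sum_squares_bound[of "cmod (coef x k)" "cmod (coef y k)"] by (simp add: power2_sum)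
  finally have "weight k * (cmod (coef (x + y) k))\<^sup>2 \<le>
      weight k * (2 * (cmod (coef x k))\<^sup>2 + 2 * (cmod (coef y k))\<^sup>2)"
    unfolding coef_add by (rule mult_left_mono[OF _ weight_nonneg])
  then show "norm (weight k * (cmod (coef (x + y) k))\<^sup>2) \<le>
      2 * (weight k * (cmod (coef x k))\<^sup>2) + 2 * (weight k * (cmod (coef y k))\<^sup>2)"
    using weight_nonneg[of k] by (simp add: algebra_simps)
qed

lemma tdom_scale: "x \<in> tdom \<Longrightarrow> sm c x \<in> tdom"
  unfolding tdom_def
  using summable_mult[of "\<lambda>k. weight k * (cmod (coef x k))\<^sup>2" "(cmod c)\<^sup>2"]
  by (simp add: coef_scale norm_mult power_mult_distrib ac_simps)

lemma tdom_subspace: "vs.subspace tdom"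
  by (rule vs.subspaceI) (auto simp: tdom_add tdom_scale, simp add: tdom_def)

lemma tdom_diff: "x \<in> tdom \<Longrightarrow> y \<in> tdom \<Longrightarrow> x - y \<in> tdom"
  by (rule vs.subspace_diff[OF tdom_subspace])

lemma tdom_finite_coef_support: "\<forall>k\<ge>N. coef y k = 0 \<Longrightarrow> y \<in> tdom"
  unfolding tdom_def by (auto intro!: summable_finite[of "{..<N}"]) (meson not_le)

lemma tdom_dense: "dense_in ip tdom"
  unfolding dense_in_def using finite_coef_support_dense tdom_finite_coef_support by blast

lemma e_in_tdom: "e j \<in> tdom"
  by (rule tdom_finite_coef_support[of "Suc j"]) (simp add: coef_e)

lemma tquad_nonneg: "x \<in> tdom \<Longrightarrow> tquad x \<ge> 0"
  unfolding tquad_def tdom_def by (auto intro!: suminf_nonneg simp: weight_nonneg)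

lemma tquad_e: "tquad (e j) = weight j"
  unfolding tquad_def by (subst suminf_finite[of "{j}"]) (auto simp: coef_e)

lemma summable_tval:
  assumes x: "x \<in> tdom" and y: "y \<in> tdom"
  shows "summable (\<lambda>k. of_real (weight k) * coef x k * cnj (coef y k))"
proof (rule summable_comparison_test')
  show "summable (\<lambda>k. weight k * (cmod (coef x k))\<^sup>2 + weight k * (cmod (coef y k))\<^sup>2)"
    using x y unfolding tdom_def by (intro summable_add) auto
  fix k
  have "cmod (coef x k) * cmod (coef y k) \<le> (cmod (coef x k))\<^sup>2 + (cmod (coef y k))\<^sup>2"
    using sum_squares_bound[of "cmod (coef x k)" "cmod (coef y k)"]
      mult_nonneg_nonneg[OF norm_ge_zero norm_ge_zero, of "coef x k" "coef y k"]
    by (simp only: mult.assoc)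
  then have "weight k * (cmod (coef x k) * cmod (coef y k)) \<le>
      weight k * ((cmod (coef x k))\<^sup>2 + (cmod (coef y k))\<^sup>2)"
    by (rule mult_left_mono[OF _ weight_nonneg])
  then show "norm (of_real (weight k) * coef x k * cnj (coef y k)) \<le>
      weight k * (cmod (coef x k))\<^sup>2 + weight k * (cmod (coef y k))\<^sup>2"
    using weight_nonneg[of k] by (simp add: norm_mult algebra_simps)
qed

lemma tval_self: "x \<in> tdom \<Longrightarrow> tval x x = of_real (tquad x)"
  unfolding tval_def tquad_def tdom_def
  by (simp add: mult.assoc complex_norm_square[symmetric] suminf_of_real)

lemma tval_add_left:
  "x \<in> tdom \<Longrightarrow> y \<in> tdom \<Longrightarrow> z \<in> tdom \<Longrightarrow> tval (x + y) z = tval x z + tval y z"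
  unfolding tval_def coef_add distrib_left distrib_right
  by (rule suminf_add[symmetric]) (auto intro: summable_tval)

lemma tval_add_right:
  "x \<in> tdom \<Longrightarrow> y \<in> tdom \<Longrightarrow> z \<in> tdom \<Longrightarrow> tval z (x + y) = tval z x + tval z y"
  unfolding tval_def coef_add complex_cnj_add distrib_left
  by (rule suminf_add[symmetric]) (auto intro: summable_tval)

lemma tval_scale_left: "x \<in> tdom \<Longrightarrow> y \<in> tdom \<Longrightarrow> tval (sm c x) y = c * tval x y"
  unfolding tval_def coef_scale
  using suminf_mult[OF summable_tval, of x y c] by (simp add: ac_simps)

lemma tval_scale_right: "x \<in> tdom \<Longrightarrow> y \<in> tdom \<Longrightarrow> tval x (sm c y) = cnj c * tval x y"
  unfolding tval_def coef_scale
  using suminf_mult[OF summable_tval, of x y "cnj c"] by (simp add: ac_simps)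

lemma norm_phi_term_le:
  assumes "\<epsilon> > 0"
  shows "norm (phi_term x k) \<le> (\<epsilon> * (1/2) ^ k + weight k * (cmod (coef x k))\<^sup>2 / \<epsilon>) / 2"
proof (cases "k = 0")
  case False
  have "0 \<le> (\<epsilon> - 2 ^ k * cmod (coef x k))\<^sup>2" by simp
  then show ?thesis
    using False assms by (simp add: phi_term_def weight_def power_one_over field_simps power2_eq_square)
qed (use assms in \<open>simp add: phi_term_def weight_def\<close>)

lemma phi_term_sums_le:
  assumes x: "x \<in> tdom" and \<epsilon>: "\<epsilon> > 0"
  shows "summable (\<lambda>k. norm (phi_term x k))"
    and "(\<Sum>k. norm (phi_term x k)) \<le> \<epsilon> + tquad x / (2 * \<epsilon>)"
proof -
  define g where "g k = (\<epsilon> * (1/2) ^ k + weight k * (cmod (coef x k))\<^sup>2 / \<epsilon>) / 2" for k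
  have g: "g sums ((\<epsilon> * 2 + tquad x / \<epsilon>) / 2)"
    using x unfolding g_def tdom_def tquad_def
    by (intro sums_divide sums_add sums_mult summable_sums) (auto intro: geometric_sums[of "1/2", simplified])
  have le: "norm (norm (phi_term x k)) \<le> g k" for k
    using norm_phi_term_le[OF \<epsilon>] by (simp add: g_def)
  show s: "summable (\<lambda>k. norm (phi_term x k))"
    by (rule summable_comparison_test'[OF sums_summable[OF g] le])
  have "(\<Sum>k. norm (phi_term x k)) \<le> suminf g"
    using le by (intro suminf_le[OF _ s sums_summable[OF g]]) simp
  also have "\<dots> = \<epsilon> + tquad x / (2 * \<epsilon>)"
    using sums_unique[OF g] \<epsilon> by (simp add: field_simps)
  finally show "(\<Sum>k. norm (phi_term x k)) \<le> \<epsilon> + tquad x / (2 * \<epsilon>)" .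
qed

lemma summable_phi_term: "x \<in> tdom \<Longrightarrow> summable (phi_term x)"
  using phi_term_sums_le(1)[of x 1] summable_norm_cancel by simp

lemma norm_phi_le: "x \<in> tdom \<Longrightarrow> \<epsilon> > 0 \<Longrightarrow> cmod (phi x) \<le> \<epsilon> + tquad x / (2 * \<epsilon>)"
  unfolding phi_def using summable_norm[OF phi_term_sums_le(1)] phi_term_sums_le(2) by (rule order_trans)

text \<open>Take \<open>\<epsilon> = \<surd>(t[x])\<close> in the previous bound.\<close>
lemma norm_phi_power2_le:
  assumes x: "x \<in> tdom"
  shows "(cmod (phi x))\<^sup>2 \<le> 3 * tquad x"
proof (cases "tquad x = 0")
  case True
  have "cmod (phi x) \<le> 0"
    by (rule field_le_epsilon) (use norm_phi_le[OF x] True in simp)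
  then show ?thesis using tquad_nonneg[OF x] by simp
next
  case False
  then have tq: "tquad x > 0" using tquad_nonneg[OF x] by simp
  have "cmod (phi x) \<le> sqrt (tquad x) + tquad x / (2 * sqrt (tquad x))"
    by (rule norm_phi_le[OF x]) (use tq in simp)
  also have "\<dots> = 3/2 * sqrt (tquad x)"
    using tq by (simp add: field_simps flip: real_sqrt_mult)
  finally have "(cmod (phi x))\<^sup>2 \<le> (3/2 * sqrt (tquad x))\<^sup>2" by (simp add: power_mono)
  also have "\<dots> = 9/4 * tquad x" using tq by (simp add: power_mult_distrib power_divide)
  finally show ?thesis using tq by simp
qed

lemma phi_add: "x \<in> tdom \<Longrightarrow> y \<in> tdom \<Longrightarrow> phi (x + y) = phi x + phi y"
proof -
  have "phi_term (x + y) = (\<lambda>k. phi_term x k + phi_term y k)"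
    by (simp add: fun_eq_iff phi_term_def coef_add)
  then show "x \<in> tdom \<Longrightarrow> y \<in> tdom \<Longrightarrow> ?thesis"
    unfolding phi_def by (simp add: suminf_add summable_phi_term)
qed

lemma phi_scale: "x \<in> tdom \<Longrightarrow> phi (sm c x) = c * phi x"
proof -
  have "phi_term (sm c x) = (\<lambda>k. c * phi_term x k)"
    by (simp add: fun_eq_iff phi_term_def coef_scale)
  then show "x \<in> tdom \<Longrightarrow> ?thesis"
    unfolding phi_def by (simp add: suminf_mult summable_phi_term)
qed

lemma phi_diff: "x \<in> tdom \<Longrightarrow> y \<in> tdom \<Longrightarrow> phi (x - y) = phi x - phi y"
  using phi_add[OF tdom_diff, of x y y] by (simp add: algebra_simps)

lemma phi_e: "phi (e j) = (if j = 0 then 0 else 1)"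
  unfolding phi_def by (subst suminf_finite[of "{j}"]) (auto simp: phi_term_def coef_e)

definition tphi_form :: "real \<Rightarrow> real \<Rightarrow> 'a form" where
  "tphi_form a b = (tdom, \<lambda>x y. if x \<in> tdom \<and> y \<in> tdom
     then of_real a * tval x y + of_real b * (phi x * cnj (phi y)) else 0)"

lemma fdom_tphi_form [simp]: "fdom (tphi_form a b) = tdom"
  by (simp add: tphi_form_def fdom_def)

lemma fval_tphi_form: "fval (tphi_form a b) x y = (if x \<in> tdom \<and> y \<in> tdom
    then of_real a * tval x y + of_real b * (phi x * cnj (phi y)) else 0)"
  by (simp add: tphi_form_def fval_def)

lemma fval_tphi_form_diag:
  "x \<in> tdom \<Longrightarrow> fval (tphi_form a b) x x = of_real (a * tquad x + b * (cmod (phi x))\<^sup>2)"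
  by (simp add: fval_tphi_form tval_self flip: complex_norm_square)

lemma is_form_tphi_form: "is_form sm ip (tphi_form a b)"
  unfolding is_form_def fdom_tphi_form
proof (intro conjI ballI allI impI)
  fix x y z assume "x \<in> tdom" "y \<in> tdom" "z \<in> tdom"
  then show "fval (tphi_form a b) (x + y) z = fval (tphi_form a b) x z + fval (tphi_form a b) y z"
    and "fval (tphi_form a b) z (x + y) = fval (tphi_form a b) z x + fval (tphi_form a b) z y"
    by (simp_all add: fval_tphi_form tdom_add tval_add_left tval_add_right phi_add algebra_simps)
next
  fix c x y assume "x \<in> tdom" "y \<in> tdom"
  then show "fval (tphi_form a b) (sm c x) y = c * fval (tphi_form a b) x y"
    and "fval (tphi_form a b) x (sm c y) = cnj c * fval (tphi_form a b) x y"
    by (simp_all add: fval_tphi_form tdom_scale tval_scale_left tval_scale_right phi_scale algebra_simps)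
qed (auto simp: tdom_subspace tdom_dense fval_tphi_form)

lemma positive_tphi_form: "a \<ge> 0 \<Longrightarrow> b \<ge> 0 \<Longrightarrow> positive_form (tphi_form a b)"
  by (simp add: positive_form_def fval_tphi_form_diag tquad_nonneg)

lemma form_plus_tphi_form: "form_plus (tphi_form a b) (tphi_form c d) = tphi_form (a + c) (b + d)"
  by (auto simp: form_plus_def tphi_form_def fdom_def fval_def algebra_simps fun_eq_iff)

lemma lower_bound_tphi_form:
  assumes "a \<ge> 0" "b \<ge> 0"
  shows "lower_bound_form ip (tphi_form a b) = 0"
  unfolding lower_bound_form_def
proof (rule cInf_eq_minimum)
  show "0 \<in> {Re (fval (tphi_form a b) x x) |x. x \<in> fdom (tphi_form a b) \<and> hn x = 1}"
    using e_in_tdom[of 0] hnorm_e[of 0]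
    by (auto simp: fval_tphi_form_diag tquad_e phi_e weight_def intro!: exI[of _ "e 0"])
qed (use assms in \<open>auto simp: fval_tphi_form_diag tquad_nonneg\<close>)

lemma tnorm_tphi_form_power2:
  assumes "a \<ge> 0" "b \<ge> 0" "x \<in> tdom"
  shows "(tnorm ip (tphi_form a b) x)\<^sup>2 = a * tquad x + b * (cmod (phi x))\<^sup>2 + (hn x)\<^sup>2"
proof -
  have "e 0 \<in> fdom (tphi_form a b)" by (simp add: e_in_tdom)
  from tnorm_power2(1)[OF is_form_tphi_form positive_tphi_form[OF assms(1,2)] this hnorm_e]
  show ?thesis by (simp add: lower_bound_tphi_form[OF assms(1,2)] fval_tphi_form_diag assms(3))
qed

lemma tnorm_tphi_form_nonneg: "a \<ge> 0 \<Longrightarrow> b \<ge> 0 \<Longrightarrow> tnorm ip (tphi_form a b) z \<ge> 0"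
  by (rule tnorm_power2(2)[OF is_form_tphi_form positive_tphi_form, of _ _ "e 0"])
    (simp_all add: e_in_tdom hnorm_e)

lemma not_bounded_tphi_form:
  assumes "a > 0" "b \<ge> 0"
  shows "\<not> bounded_form ip (tphi_form a b)"
proof
  assume "bounded_form ip (tphi_form a b)"
  then obtain M where M: "\<And>x. x \<in> tdom \<Longrightarrow> hn x = 1 \<Longrightarrow> Re (fval (tphi_form a b) x x) \<le> M"
    unfolding bounded_form_def bdd_above_def fdom_tphi_form by blast
  obtain n :: nat where n: "M / a < n" using reals_Archimedean2 by blast
  have "a * 2 ^ Suc n + b \<le> M"
    using M[OF e_in_tdom hnorm_e, of "Suc n"] by (simp add: fval_tphi_form_diag e_in_tdom tquad_e phi_e weight_def)
  moreover have "a * real n < a * 2 ^ Suc n"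
    using of_nat_less_two_power[of "Suc n", where 'a=real] assms(1) by simp
  moreover have "M < a * real n" using n assms(1) by (simp add: field_simps)
  ultimately show False using assms(2) by linarith
qed

lemma tphi_form_in_Vf: "a > 0 \<Longrightarrow> b \<ge> 0 \<Longrightarrow> tphi_form a b \<in> Vf sm ip"
  unfolding Vf_def using is_form_tphi_form positive_tphi_form not_bounded_tphi_form by auto

text \<open>Completeness of \<open>t\<close>: partial sums of \<open>t[X n - l]\<close> are limits of partial sums of
  \<open>t[X n - X m]\<close>, because coefficients converge along the \<open>\<H>\<close>-limit (Fatou's lemma).\<close>
lemma tquad_Cauchy_limit:
  assumes X: "\<And>n. X n \<in> tdom" and l: "(\<lambda>n. hn (X n - l)) \<longlonglongrightarrow> 0"
    and Cauchy: "\<And>\<epsilon>. \<epsilon> > 0 \<Longrightarrow> \<exists>N. \<forall>m\<ge>N. \<forall>n\<ge>N. tquad (X n - X m) \<le> \<epsilon>"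
  shows "l \<in> tdom" and "(\<lambda>n. tquad (X n - l)) \<longlonglongrightarrow> 0"
proof -
  have near: "\<exists>N. \<forall>n\<ge>N. X n - l \<in> tdom \<and> tquad (X n - l) \<le> \<epsilon>" if \<epsilon>: "\<epsilon> > 0" for \<epsilon>
  proof -
    obtain N where N: "\<forall>m\<ge>N. \<forall>n\<ge>N. tquad (X n - X m) \<le> \<epsilon>" using Cauchy[OF \<epsilon>] by blast
    have partial: "(\<Sum>k<K. weight k * (cmod (coef (X n - l) k))\<^sup>2) \<le> \<epsilon>" if n: "n \<ge> N" for n K
    proof (rule LIMSEQ_le_const2)
      show "(\<lambda>m. \<Sum>k<K. weight k * (cmod (coef (X n - X m) k))\<^sup>2) \<longlonglongrightarrow>
          (\<Sum>k<K. weight k * (cmod (coef (X n - l) k))\<^sup>2)"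
        unfolding coef_diff by (intro tendsto_intros coef_tendsto[OF l])
      have "(\<Sum>k<K. weight k * (cmod (coef (X n - X m) k))\<^sup>2) \<le> tquad (X n - X m)" for m
        using tdom_diff[OF X X, of n m] unfolding tquad_def tdom_def
        by (intro sum_le_suminf) (auto simp: weight_nonneg)
      then show "\<exists>N'. \<forall>m\<ge>N'. (\<Sum>k<K. weight k * (cmod (coef (X n - X m) k))\<^sup>2) \<le> \<epsilon>"
        using N n by (meson order_trans)
    qed
    have "summable (\<lambda>k. weight k * (cmod (coef (X n - l) k))\<^sup>2)" if "n \<ge> N" for n
    proof (rule bounded_imp_summable[where B=\<epsilon>])
      show "0 \<le> weight j * (cmod (coef (X n - l) j))\<^sup>2" for j by (simp add: weight_nonneg)
      show "(\<Sum>k\<le>j. weight k * (cmod (coef (X n - l) k))\<^sup>2) \<le> \<epsilon>" for j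
        using partial[OF that, of "Suc j"] by (simp add: lessThan_Suc_atMost)
    qed
    with partial show ?thesis
      unfolding tdom_def tquad_def by (blast intro: suminf_le_const)
  qed
  obtain N where "X N - l \<in> tdom" using near[of 1] by auto
  then show "l \<in> tdom" using tdom_diff[OF X[of N] \<open>X N - l \<in> tdom\<close>] by simp
  show "(\<lambda>n. tquad (X n - l)) \<longlonglongrightarrow> 0"
  proof (rule LIMSEQ_I)
    fix r :: real assume "r > 0"
    then obtain N where "\<forall>n\<ge>N. X n - l \<in> tdom \<and> tquad (X n - l) \<le> r / 2" using near[of "r / 2"] by auto
    then show "\<exists>N. \<forall>n\<ge>N. norm (tquad (X n - l) - 0) < r"
      using \<open>r > 0\<close> tquad_nonneg by (auto intro!: exI[of _ N])
  qed
qed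

text \<open>This is where \<open>\<bar>\<phi>\<bar>\<^sup>2 \<le> 3 t\<close> enters: convergence in \<open>t\<close> and in \<open>\<H>\<close> already controls the
  \<open>\<bar>\<phi>\<bar>\<^sup>2\<close> part of the norm.\<close>
lemma tnorm_tphi_form_tendsto_0:
  assumes "a \<ge> 0" "b \<ge> 0" and z: "\<And>n. z n \<in> tdom"
    and t0: "(\<lambda>n. tquad (z n)) \<longlonglongrightarrow> 0" and h0: "(\<lambda>n. hn (z n)) \<longlonglongrightarrow> 0"
  shows "(\<lambda>n. tnorm ip (tphi_form a b) (z n)) \<longlonglongrightarrow> 0"
proof -
  have phi0: "(\<lambda>n. (cmod (phi (z n)))\<^sup>2) \<longlonglongrightarrow> 0"
    by (rule tendsto_0_sandwich[OF _ norm_phi_power2_le[OF z]])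
      (use tendsto_mult_right_zero[OF t0, of 3] in simp_all)
  have "(\<lambda>n. sqrt ((tnorm ip (tphi_form a b) (z n))\<^sup>2)) \<longlonglongrightarrow> sqrt (a * 0 + b * 0 + 0\<^sup>2)"
    unfolding tnorm_tphi_form_power2[OF assms(1,2) z] by (intro tendsto_intros t0 phi0 h0)
  then show ?thesis using tnorm_tphi_form_nonneg[OF assms(1,2)] by simp
qed

lemma closed_tphi_form:
  assumes a: "a > 0" and b: "b \<ge> 0"
  shows "closed_form ip (tphi_form a b)"
  unfolding closed_form_def
proof (intro conjI allI impI)
  show "positive_form (tphi_form a b)" using a b by (simp add: positive_tphi_form)
  fix X :: "nat \<Rightarrow> 'a"
  assume "(\<forall>n. X n \<in> fdom (tphi_form a b)) \<and>
    (\<forall>\<epsilon>>0. \<exists>N. \<forall>m\<ge>N. \<forall>n\<ge>N. tnorm ip (tphi_form a b) (X m - X n) < \<epsilon>)"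
  then have X: "\<And>n. X n \<in> tdom"
    and Cauchy: "\<And>\<epsilon>. \<epsilon> > 0 \<Longrightarrow> \<exists>N. \<forall>m\<ge>N. \<forall>n\<ge>N. tnorm ip (tphi_form a b) (X m - X n) < \<epsilon>"
    by auto
  note tn = tnorm_tphi_form_power2[OF less_imp_le[OF a] b]
  have form: "is_form sm ip (tphi_form a b)" "positive_form (tphi_form a b)"
    "e 0 \<in> fdom (tphi_form a b)" "hn (e 0) = 1"
    using a b by (simp_all add: is_form_tphi_form positive_tphi_form e_in_tdom hnorm_e)
  note hn_le = hnorm_le_tnorm[OF form]
  have "\<exists>l. (\<lambda>n. hn (X n - l)) \<longlonglongrightarrow> 0"
  proof (rule Cauchy_convergent, intro allI impI)
    fix \<epsilon> :: real assume "\<epsilon> > 0"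
    then show "\<exists>N. \<forall>m\<ge>N. \<forall>n\<ge>N. hn (X m - X n) < \<epsilon>"
      using Cauchy hn_le by (meson le_less_trans)
  qed
  then obtain l where l: "(\<lambda>n. hn (X n - l)) \<longlonglongrightarrow> 0" by blast
  have "\<exists>N. \<forall>m\<ge>N. \<forall>n\<ge>N. tquad (X n - X m) \<le> \<epsilon>" if \<epsilon>: "\<epsilon> > 0" for \<epsilon>
  proof -
    obtain N where N: "\<forall>m\<ge>N. \<forall>n\<ge>N. tnorm ip (tphi_form a b) (X n - X m) < sqrt (a * \<epsilon>)"
      using Cauchy[of "sqrt (a * \<epsilon>)"] a \<epsilon> by auto
    have "a * tquad (X n - X m) \<le> a * \<epsilon>" if "m \<ge> N" "n \<ge> N" for m n
    proof -
      have "a * tquad (X n - X m) \<le> (tnorm ip (tphi_form a b) (X n - X m))\<^sup>2"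
        using tn[OF tdom_diff[OF X X]] b by simp
      also have "\<dots> \<le> (sqrt (a * \<epsilon>))\<^sup>2"
        using N that tnorm_tphi_form_nonneg a b by (intro power_mono) (auto intro: less_imp_le)
      finally show ?thesis using a \<epsilon> by simp
    qed
    then show ?thesis using a by auto
  qed
  from tquad_Cauchy_limit[OF X l this]
  have l_in: "l \<in> tdom" and "(\<lambda>n. tquad (X n - l)) \<longlonglongrightarrow> 0" by auto
  with l have "(\<lambda>n. tnorm ip (tphi_form a b) (X n - l)) \<longlonglongrightarrow> 0"
    by (intro tnorm_tphi_form_tendsto_0 tdom_diff X) (use a b in auto)
  with l_in show "\<exists>l\<in>fdom (tphi_form a b). (\<lambda>n. tnorm ip (tphi_form a b) (X n - l)) \<longlonglongrightarrow> 0"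
    by auto
qed

definition flat :: "nat \<Rightarrow> 'a" where
  "flat n = (\<Sum>k\<in>{1..Suc n}. sm (of_real (1 / real (Suc n))) (e k))"

lemma coef_flat: "coef (flat n) k = (if k \<in> {1..Suc n} then of_real (1 / real (Suc n)) else 0)"
  unfolding flat_def by (rule coef_sum_e) simp

lemma flat_in_tdom: "flat n \<in> tdom"
  by (rule tdom_finite_coef_support[of "Suc (Suc n)"]) (simp add: coef_flat)

lemma phi_flat: "phi (flat n) = 1"
proof -
  have "phi (flat n) = (\<Sum>k\<in>{1..Suc n}. of_real (1 / real (Suc n)))"
    unfolding phi_def by (subst suminf_finite[of "{1..Suc n}"]) (auto simp: phi_term_def coef_flat)
  also have "\<dots> = of_real (real (card {1..Suc n}) * (1 / real (Suc n)))"
    by (simp only: sum_constant of_real_mult of_real_of_nat_eq)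
  finally show ?thesis by simp
qed

lemma hnorm_flat: "hn (flat n) = sqrt (1 / real (Suc n))"
proof -
  have "(hn (flat n))\<^sup>2 = (\<Sum>k\<in>{1..Suc n}. (1 / real (Suc n))\<^sup>2)"
    unfolding flat_def hnorm_sum_e_power2[OF finite_atLeastAtMost] by (simp only: norm_of_real power2_abs)
  also have "\<dots> = 1 / real (Suc n)" by (simp add: power2_eq_square)
  finally show ?thesis using hnorm_nonneg[of "flat n"] by (metis real_sqrt_abs abs_of_nonneg)
qed

lemma flat_tendsto_0: "(\<lambda>n. hn (flat n)) \<longlonglongrightarrow> 0"
  unfolding hnorm_flat using tendsto_real_sqrt[OF LIMSEQ_inverse_real_of_nat]
  by (simp add: inverse_eq_divide)

lemma fval_phi_form_diag: "x \<in> tdom \<Longrightarrow> fval (tphi_form 0 1) x x = of_real ((cmod (phi x))\<^sup>2)"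
  by (simp add: fval_tphi_form_diag)

text \<open>Every vector of \<open>D(t)\<close> is an \<open>\<H>\<close>-limit of vectors of \<open>ker \<phi>\<close>, on which a
  closable form below \<open>\<bar>\<phi>\<bar>\<^sup>2\<close> vanishes; its closure therefore vanishes everywhere.\<close>
lemma closable_below_phi_form_zero:
  assumes u: "is_form sm ip u" "fdom u = tdom" "positive_form u" "closable_form sm ip u"
    and below: "\<And>x. x \<in> tdom \<Longrightarrow> Re (fval u x x) \<le> (cmod (phi x))\<^sup>2"
    and x: "x \<in> tdom"
  shows "fval u x x = 0"
proof -
  obtain s where s: "is_form sm ip s" "positive_form s" "closed_form ip s"
    and dom: "tdom \<subseteq> fdom s" and ext: "\<And>y z. y \<in> tdom \<Longrightarrow> z \<in> tdom \<Longrightarrow> fval s y z = fval u y z"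
    using u(2,4) unfolding closable_form_def by auto
  have null_ker: "fval u y y = 0" if "y \<in> tdom" "phi y = 0" for y
    using below[OF that(1)] u(2,3) that unfolding positive_form_def
    by (metis complex_eq_iff zero_complex.sel order_antisym norm_zero zero_power2)
  define v where "v n = x - sm (phi x) (flat n)" for n
  have v: "v n \<in> tdom" "phi (v n) = 0" for n
    unfolding v_def using x flat_in_tdom by (simp_all add: tdom_diff tdom_scale phi_diff phi_scale phi_flat)
  have "hn (v n - x) = cmod (phi x) * hn (flat n)" for n
    by (simp add: v_def hnorm_uminus hnorm_scale)
  then have lim: "(\<lambda>n. hn (v n - x)) \<longlonglongrightarrow> 0"
    using tendsto_mult_right_zero[OF flat_tendsto_0, of "cmod (phi x)"] by simp
  have "v n \<in> fdom s" "fval s (v n) (v n) = 0" for n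
    using dom ext null_ker v by auto
  then have "fval s x x = 0"
    using closed_form_null_limit[OF s _ hnorm_e _ _ lim] dom e_in_tdom by blast
  then show ?thesis using ext[OF x x] by simp
qed

lemma not_closed_phi_form: "\<not> closed_form ip (tphi_form 0 1)"
proof
  assume "closed_form ip (tphi_form 0 1)"
  then have "closable_form sm ip (tphi_form 0 1)"
    unfolding closable_form_def
    by (intro exI[of _ "tphi_form 0 1"]) (simp add: is_form_tphi_form positive_tphi_form)
  then have "fval (tphi_form 0 1) (flat 0) (flat 0) = 0"
    by (intro closable_below_phi_form_zero is_form_tphi_form positive_tphi_form flat_in_tdom)
      (simp_all add: fval_phi_form_diag)
  then show False by (simp add: flat_in_tdom fval_phi_form_diag phi_flat)
qed

lemma regular_part_phi_form: "regular_part sm ip (tphi_form 0 1) = (tdom, \<lambda>_ _. 0)"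
proof (rule regular_part_eqI)
  have fdom0: "fdom (tdom, \<lambda>_ _. 0) = tdom" and fval0: "fval (tdom, \<lambda>_ _. 0) x y = 0" for x y
    by (simp_all add: fdom_def fval_def)
  show "is_regular_part sm ip (tphi_form 0 1) (tdom, \<lambda>_ _. 0)"
    unfolding is_regular_part_def fdom0 fval0 fdom_tphi_form
  proof (intro conjI ballI allI impI)
    show "is_form sm ip (tdom, \<lambda>_ _. 0)"
      by (simp add: is_form_def fdom0 fval0 tdom_subspace tdom_dense)
    show "closable_form sm ip (tdom, \<lambda>_ _. 0)" by (rule closable_zero_on[OF hnorm_e])
    show "positive_form (tdom, \<lambda>_ _. 0)" by (simp add: positive_form_def fdom0 fval0)
    show "Re 0 \<le> Re (fval (tphi_form 0 1) x x)" if "x \<in> tdom" for x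
      using that by (simp add: fval_phi_form_diag)
    fix u x
    assume "is_form sm ip u \<and> fdom u = tdom \<and> positive_form u \<and> closable_form sm ip u \<and>
      (\<forall>x\<in>tdom. Re (fval u x x) \<le> Re (fval (tphi_form 0 1) x x))" and x: "x \<in> tdom"
    then show "Re (fval u x x) \<le> Re 0"
      using closable_below_phi_form_zero[of u x] by (simp add: fval_phi_form_diag)
  qed simp
qed

lemma not_regular_phi_form: "\<not> regular_form sm ip (tphi_form 0 1)"
  using flat_in_tdom[of 0]
  by (auto simp: regular_form_def singular_part_def regular_part_phi_form fval_def[of "(_, _)"]
      fval_phi_form_diag phi_flat intro!: bexI[of _ "flat 0"])

lemma not_bounded_phi_form: "\<not> bounded_form ip (tphi_form 0 1)"
proof
  assume "bounded_form ip (tphi_form 0 1)"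
  then obtain M where M: "\<And>x. x \<in> tdom \<Longrightarrow> hn x = 1 \<Longrightarrow> Re (fval (tphi_form 0 1) x x) \<le> M"
    unfolding bounded_form_def bdd_above_def fdom_tphi_form by blast
  obtain n :: nat where n: "M < real n" using reals_Archimedean2 by blast
  define y where "y = sm (of_real (sqrt (real (Suc n)))) (flat n)"
  have "y \<in> tdom" unfolding y_def by (intro tdom_scale flat_in_tdom)
  moreover have "hn y = 1"
    unfolding y_def hnorm_scale hnorm_flat by (simp add: real_sqrt_divide flip: real_sqrt_mult)
  moreover have "(cmod (phi y))\<^sup>2 = real (Suc n)"
    unfolding y_def using flat_in_tdom by (simp add: phi_scale phi_flat)
  ultimately show False using M[of y] n by (simp add: fval_phi_form_diag)
qed

end

lemma restr_leD:
  assumes "restr_le ip Q x y"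
  shows "\<exists>z\<in>Q. y = form_plus x z \<and> (bounded_form ip x \<or> bounded_form ip z \<or> fdom x = fdom z)"
  using assms unfolding restr_le_def restr_oplus_def form_oplus_def
  by (auto split: if_splits option.splits)

lemma fdom_form_plus [simp]: "fdom (form_plus t s) = fdom t \<inter> fdom s"
  by (simp add: form_plus_def fdom_def)

lemma fval_form_plus:
  "x \<in> fdom t \<inter> fdom s \<Longrightarrow> y \<in> fdom t \<inter> fdom s \<Longrightarrow> fval (form_plus t s) x y = fval t x y + fval s x y"
  by (simp add: form_plus_def fval_def fdom_def)

lemma restr_le_imp_le:
  assumes Q: "Q \<subseteq> Vf sm ip" and le: "restr_le ip Q x y"
  shows "fdom y \<subseteq> fdom x" and "\<And>z. z \<in> fdom y \<Longrightarrow> Re (fval x z z) \<le> Re (fval y z z)"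
proof -
  obtain w where w: "w \<in> Q" and y: "y = form_plus x w" using restr_leD[OF le] by blast
  show "fdom y \<subseteq> fdom x" using y by simp
  fix z assume "z \<in> fdom y"
  moreover have "positive_form w" using w Q by (auto simp: Vf_def)
  ultimately show "Re (fval x z z) \<le> Re (fval y z z)"
    using y by (simp add: fval_form_plus positive_form_def)
qed

lemma bounded_form_agree:
  assumes "bounded_form ip s" "fdom t \<subseteq> fdom s" "\<And>x. x \<in> fdom t \<Longrightarrow> fval t x x = fval s x x"
  shows "bounded_form ip t"
  unfolding bounded_form_def
  by (rule bdd_above_mono[OF assms(1)[unfolded bounded_form_def]]) (use assms(2,3) in force)

context orthonormal_sequence
begin

lemma restr_le_tphi_form:
  assumes Q: "\<And>a b. a > 0 \<Longrightarrow> b \<ge> 0 \<Longrightarrow> tphi_form a b \<in> Q"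
    and "0 < a" "a < a'" "0 \<le> b" "b \<le> b'"
  shows "restr_le ip Q (tphi_form a b) (tphi_form a' b')"
  unfolding restr_le_def restr_oplus_def form_oplus_def
  using assms Q[of "a' - a" "b' - b"] Q[of a' b']
  by (auto intro!: bexI[of _ "tphi_form (a' - a) (b' - b)"] simp: form_plus_tphi_form)

lemma inf_tphi_form_diag:
  assumes Q: "Q \<subseteq> Vf sm ip"
    and above: "restr_le ip Q (tphi_form 1 1) a"
    and below: "\<And>n. restr_le ip Q a (tphi_form (1 + 1 / real (Suc n)) 1)"
  shows "fdom a = tdom" and "\<And>x. x \<in> tdom \<Longrightarrow> Re (fval a x x) = tquad x + (cmod (phi x))\<^sup>2"
proof -
  show dom: "fdom a = tdom"
    using restr_le_imp_le(1)[OF Q above] restr_le_imp_le(1)[OF Q below[of 0]] by auto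
  fix x assume x: "x \<in> tdom"
  have lower: "tquad x + (cmod (phi x))\<^sup>2 \<le> Re (fval a x x)"
    using restr_le_imp_le(2)[OF Q above] x dom by (simp add: fval_tphi_form_diag)
  have upper: "Re (fval a x x) \<le> (1 + 1 / real (Suc n)) * tquad x + (cmod (phi x))\<^sup>2" for n
    using restr_le_imp_le(2)[OF Q below[of n]] x by (simp add: fval_tphi_form_diag)
  have "(\<lambda>n. 1 / real (Suc n)) \<longlonglongrightarrow> 0"
    using LIMSEQ_inverse_real_of_nat by (simp add: inverse_eq_divide)
  then have "(\<lambda>n. (1 + 1 / real (Suc n)) * tquad x + (cmod (phi x))\<^sup>2) \<longlonglongrightarrow>
      (1 + 0) * tquad x + (cmod (phi x))\<^sup>2"
    by (intro tendsto_intros)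
  then have "Re (fval a x x) \<le> (1 + 0) * tquad x + (cmod (phi x))\<^sup>2"
    by (rule LIMSEQ_le_const) (use upper in blast)
  with lower show "Re (fval a x x) = tquad x + (cmod (phi x))\<^sup>2" by simp
qed

lemma phi_form_eqI:
  assumes Q: "Q \<subseteq> Vf sm ip" and w: "w \<in> Q" and a: "a = form_plus (tphi_form 1 0) w"
    and defined: "bounded_form ip (tphi_form 1 0) \<or> bounded_form ip w \<or> fdom (tphi_form 1 0) = fdom w"
    and dom: "fdom a = tdom" and diag: "\<And>x. x \<in> tdom \<Longrightarrow> Re (fval a x x) = tquad x + (cmod (phi x))\<^sup>2"
  shows "w = tphi_form 0 1"
proof -
  have w_form: "is_form sm ip w" "positive_form w" using w Q by (auto simp: Vf_def)
  have sub: "tdom \<subseteq> fdom w" using dom a by auto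
  have w_diag: "fval w x x = fval (tphi_form 0 1) x x" if x: "x \<in> tdom" for x
  proof -
    have "Re (fval w x x) = (cmod (phi x))\<^sup>2"
      using diag[OF x] a x sub by (simp add: fval_form_plus subsetD fval_tphi_form_diag)
    moreover have "Im (fval w x x) = 0" using w_form(2) x sub by (auto simp: positive_form_def)
    ultimately show ?thesis using x by (simp add: fval_phi_form_diag complex_eq_iff)
  qed
  have "\<not> bounded_form ip w"
    using bounded_form_agree[where s=w and t="tphi_form 0 1"] sub w_diag not_bounded_phi_form by auto
  with defined have "fdom w = tdom" using not_bounded_tphi_form[of 1 0] by auto
  then show ?thesis
    by (intro form_eqI w_form(1) is_form_tphi_form) (simp_all add: w_diag)
qed

lemma not_mono_dedekind_down_sigma_complete:
  assumes Q: "Q \<subseteq> Vf sm ip"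
    and tphi_in: "\<And>a b. a > 0 \<Longrightarrow> b \<ge> 0 \<Longrightarrow> tphi_form a b \<in> Q"
    and phi_notin: "tphi_form 0 1 \<notin> Q"
  shows "\<not> mono_dedekind_down_sigma_complete ip Q"
proof
  assume "mono_dedekind_down_sigma_complete ip Q"
  define X where "X n = tphi_form (1 + 1 / real (Suc n)) 1" for n
  have XQ: "X n \<in> Q" for n unfolding X_def by (rule tphi_in) (auto simp: add_pos_pos)
  have dec: "restr_le ip Q (X (Suc n)) (X n)" for n
    unfolding X_def by (rule restr_le_tphi_form[OF tphi_in]) (auto intro: add_pos_pos divide_strict_left_mono)
  obtain a where below: "\<And>n. restr_le ip Q a (X n)"
    and greatest: "\<And>b. b \<in> Q \<Longrightarrow> (\<forall>n. restr_le ip Q b (X n)) \<Longrightarrow> restr_le ip Q b a"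
    using \<open>mono_dedekind_down_sigma_complete ip Q\<close>[unfolded mono_dedekind_down_sigma_complete_def,
        rule_format, of X] XQ dec
    by blast
  have lower_bound: "restr_le ip Q (tphi_form 1 b) a" if "b \<in> {0, 1}" for b
  proof (rule greatest)
    show "tphi_form 1 b \<in> Q" using that by (auto intro: tphi_in)
    show "\<forall>n. restr_le ip Q (tphi_form 1 b) (X n)"
      using that unfolding X_def by (auto intro: restr_le_tphi_form[OF tphi_in])
  qed
  have dom: "fdom a = tdom" and diag: "\<And>x. x \<in> tdom \<Longrightarrow> Re (fval a x x) = tquad x + (cmod (phi x))\<^sup>2"
    using inf_tphi_form_diag[OF Q lower_bound[of 1] below[unfolded X_def]] by auto
  obtain w where w: "w \<in> Q" "a = form_plus (tphi_form 1 0) w"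
    "bounded_form ip (tphi_form 1 0) \<or> bounded_form ip w \<or> fdom (tphi_form 1 0) = fdom w"
    using restr_leD[OF lower_bound[of 0]] by auto
  then have "w = tphi_form 0 1" by (rule phi_form_eqI[OF Q _ _ _ dom diag])
  with w(1) phi_notin show False by simp
qed

end

theorem theorem5p6:
  fixes sm :: "complex \<Rightarrow> 'a::ab_group_add \<Rightarrow> 'a"
    and ip :: "'a \<Rightarrow> 'a \<Rightarrow> complex"
  assumes "complex_hilbert_space sm ip"
    and "infinite_dimensional sm"
  shows "\<not> mono_dedekind_down_sigma_complete ip (Rf sm ip) \<and>
         \<not> mono_dedekind_down_sigma_complete ip (Cf sm ip)"
proof -
  interpret complex_hilbert sm ip by unfold_locales (rule assms(1))
  obtain e :: "nat \<Rightarrow> 'a" where "\<And>i j. ip (e i) (e j) = (if i = j then 1 else 0)"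
    using orthonormal_sequence_exists[OF assms(2)] by blast
  then interpret orthonormal_sequence sm ip e by unfold_locales
  have closed: "tphi_form a b \<in> Cf sm ip" if "a > 0" "b \<ge> 0" for a b
    using that by (simp add: Cf_def closed_tphi_form tphi_form_in_Vf)
  have regular: "tphi_form a b \<in> Rf sm ip" if "a > 0" "b \<ge> 0" for a b
    using that closed_imp_regular[OF is_form_tphi_form positive_tphi_form closed_tphi_form]
    by (simp add: Rf_def tphi_form_in_Vf)
  show ?thesis
  proof
    show "\<not> mono_dedekind_down_sigma_complete ip (Rf sm ip)"
      by (rule not_mono_dedekind_down_sigma_complete[OF _ regular])
        (auto simp: Rf_def not_regular_phi_form)
    show "\<not> mono_dedekind_down_sigma_complete ip (Cf sm ip)"
      by (rule not_mono_dedekind_down_sigma_complete[OF _ closed])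
        (auto simp: Cf_def not_closed_phi_form)
  qed
qed

end
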